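(* Let $\mathcal{P}=\bigcup_n \mathcal{P}_n$ be a p-quasirandom family of permutations. Then for every fixed word $\sigma=\sigma_1\ldots\sigma_k$ of $k$ distinct positive integers, the probability that a uniformly random $\pi\in\mathcal{P}_n$ contains $\sigma$ as a subsequence tends to $1/k!$ as $n\to\infty$ (over those $n$ with $\mathcal{P}_n\neq\emptyset$).
   Context: A permutation $\pi=\pi_1\ldots\pi_n\in\mathcal{S}_n$ contains a word $\sigma=\sigma_1\ldots\sigma_k$ of distinct letters as a subsequence if there are indices $i_1<\cdots<i_k$ with $\pi_{i_1}=\sigma_1,\ldots,\pi_{i_k}=\sigma_k$. Let $\mathcal{P}_n\subseteq\mathcal{S}_n$ be nonempty for infinitely many $n$ and $\mathcal{P}=\bigcup_n\mathcal{P}_n$. For $\tau\in\mathcal{S}_k$ and $\mathcal{P}_n\ne\emptyset$, let $f(n,\tau)$ be the fraction of permutations in $\mathcal{P}_n$ containing $\tau$ as a subsequence. $\mathcal{P}$ is p-quasirandom if for every $k\ge1$, $\lim_{n\to\infty}\max_{\tau\in\mathcal{S}_k}|f(n,\tau)-1/k!|=0$, the limit taken over $n$ with $\mathcal{P}_n\neq\emptyset$. *)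

theory Defs
  imports Complex_Main
begin

definition perms :: "nat \<Rightarrow> nat list set" where
  "perms n = {\<pi>. distinct \<pi> \<and> set \<pi> = {1..n}}"

definition contains_subseq :: "nat list \<Rightarrow> nat list \<Rightarrow> bool" where
  "contains_subseq \<pi> \<sigma> \<longleftrightarrow>
     (\<exists>idx :: nat list. length idx = length \<sigma> \<and> sorted_wrt (<) idx \<and>
        (\<forall>j < length \<sigma>. idx ! j < length \<pi> \<and> \<pi> ! (idx ! j) = \<sigma> ! j))"

definition frac :: "(nat \<Rightarrow> nat list set) \<Rightarrow> nat \<Rightarrow> nat list \<Rightarrow> real" where
  "frac P n \<sigma> = real (card {\<pi> \<in> P n. contains_subseq \<pi> \<sigma>}) / real (card (P n))"

definition nonempty_seq :: "(nat \<Rightarrow> nat list set) \<Rightarrow> nat filter" where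
  "nonempty_seq P = inf sequentially (principal {n. P n \<noteq> {}})"

definition p_quasirandom :: "(nat \<Rightarrow> nat list set) \<Rightarrow> bool" where
  "p_quasirandom P \<longleftrightarrow>
     (\<forall>k \<ge> 1. ((\<lambda>n. Max ((\<lambda>\<tau>. \<bar>frac P n \<tau> - 1 / fact k\<bar>) ` perms k))
                 \<longlongrightarrow> 0) (nonempty_seq P))"

end

theory Submission
  imports Defs "HOL-Library.Sublist" "HOL-Combinatorics.Multiset_Permutations"
begin

text \<open>Fix m with set \<sigma> \<subseteq> {1..m}. For n \<ge> m, a permutation \<pi> of [n] contains a permutation \<rho> of
  [m] iff \<rho> is the restriction of \<pi> to {1..m}, and it contains \<sigma> iff that restriction does.
  Hence the fraction for \<sigma> is the sum of the fractions of those \<rho> \<in> S_m that restrict to \<sigma>,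
  each of which tends to 1/m! by quasirandomness. Relabelling the letters of \<sigma> shows that all
  k! orderings of set \<sigma> have equally many extensions to S_m, so there are m!/k! of them and
  the limit is (m!/k!)/m! = 1/k!.\<close>

lemma contains_subseq_altdef:
  "contains_subseq \<pi> \<sigma> \<longleftrightarrow>
     (\<exists>idx. sorted_wrt (<) idx \<and> set idx \<subseteq> {..<length \<pi>} \<and> \<sigma> = map ((!) \<pi>) idx)"
  unfolding contains_subseq_def
proof (intro iffI; elim exE conjE)
  fix idx
  assume "length idx = length \<sigma>" "sorted_wrt (<) idx"
    "\<forall>j<length \<sigma>. idx ! j < length \<pi> \<and> \<pi> ! (idx ! j) = \<sigma> ! j"
  then show "\<exists>idx. sorted_wrt (<) idx \<and> set idx \<subseteq> {..<length \<pi>} \<and> \<sigma> = map ((!) \<pi>) idx"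
    by (intro exI[of _ idx]) (auto simp: in_set_conv_nth intro: nth_equalityI)
next
  fix idx
  assume "sorted_wrt (<) idx" "set idx \<subseteq> {..<length \<pi>}" "\<sigma> = map ((!) \<pi>) idx"
  then show "\<exists>idx. length idx = length \<sigma> \<and> sorted_wrt (<) idx \<and>
               (\<forall>j<length \<sigma>. idx ! j < length \<pi> \<and> \<pi> ! (idx ! j) = \<sigma> ! j)"
    using nth_mem by (intro exI[of _ idx]) fastforce
qed

lemma sorted_wrt_less_obtain_map_Suc:
  assumes "sorted_wrt (<) idx" "set idx \<subseteq> {0<..<Suc n}"
  obtains idx' where "idx = map Suc idx'" "sorted_wrt (<) idx'" "set idx' \<subseteq> {..<n}"
proof
  show "idx = map Suc (map (\<lambda>i. i - 1) idx)"
    using assms(2) by (induction idx) auto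
  show "sorted_wrt (<) (map (\<lambda>i. i - 1) idx)"
    unfolding sorted_wrt_map
    by (rule sorted_wrt_mono_rel[OF _ assms(1)]) (use assms(2) in \<open>force simp: subset_iff\<close>)
  show "set (map (\<lambda>i. i - 1) idx) \<subseteq> {..<n}"
    using assms(2) by (force simp: subset_iff)
qed

lemma subseq_map_nth:
  "sorted_wrt (<) idx \<Longrightarrow> set idx \<subseteq> {..<length xs} \<Longrightarrow> subseq (map ((!) xs) idx) xs"
proof (induction xs arbitrary: idx)
  case Nil
  then show ?case by simp
next
  case (Cons x xs)
  show ?case
  proof (cases idx)
    case Nil
    then show ?thesis by simp
  next
    case idx: (Cons i rest)
    show ?thesis
    proof (cases i)
      case 0
      have "sorted_wrt (<) rest" "set rest \<subseteq> {0<..<Suc (length xs)}"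
        using Cons.prems idx 0 by auto
      then obtain rest' where "rest = map Suc rest'" "subseq (map ((!) xs) rest') xs"
        by (metis sorted_wrt_less_obtain_map_Suc Cons.IH)
      then show ?thesis using idx 0 by (simp add: comp_def)
    next
      case Suc
      have "set idx \<subseteq> {0<..<Suc (length xs)}"
        using Cons.prems idx Suc by (force simp: subset_iff)
      then obtain idx' where "idx = map Suc idx'" "subseq (map ((!) xs) idx') xs"
        by (metis sorted_wrt_less_obtain_map_Suc Cons.IH Cons.prems(1))
      then show ?thesis by (simp add: comp_def list_emb_Cons)
    qed
  qed
qed

lemma subseq_imp_indices:
  "subseq ys xs \<Longrightarrow>
     \<exists>idx. sorted_wrt (<) idx \<and> set idx \<subseteq> {..<length xs} \<and> ys = map ((!) xs) idx"
proof (induction rule: list_emb.induct)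
  case (list_emb_Nil xs)
  show ?case by (intro exI[of _ "[]"]) simp
next
  case (list_emb_Cons ys xs x)
  then obtain idx where "sorted_wrt (<) idx" "set idx \<subseteq> {..<length xs}" "ys = map ((!) xs) idx"
    by blast
  then show ?case
    by (intro exI[of _ "map Suc idx"]) (auto simp: sorted_wrt_map comp_def)
next
  case (list_emb_Cons2 y x ys xs)
  then obtain idx where "sorted_wrt (<) idx" "set idx \<subseteq> {..<length xs}" "ys = map ((!) xs) idx"
    by blast
  then show ?case
    using list_emb_Cons2.hyps(1)
    by (intro exI[of _ "0 # map Suc idx"]) (auto simp: sorted_wrt_map comp_def)
qed

lemma contains_subseq_iff_subseq: "contains_subseq \<pi> \<sigma> \<longleftrightarrow> subseq \<sigma> \<pi>"
  unfolding contains_subseq_altdef using subseq_map_nth subseq_imp_indices by blast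

lemma subseq_distinct_iff_filter:
  assumes "distinct xs"
  shows "subseq ys xs \<longleftrightarrow> filter (\<lambda>x. x \<in> set ys) xs = ys"
proof
  assume "subseq ys xs"
  then show "filter (\<lambda>x. x \<in> set ys) xs = ys"
    using assms
  proof (induction rule: list_emb.induct)
    case (list_emb_Nil xs)
    then show ?case by simp
  next
    case (list_emb_Cons ys xs x)
    have "x \<notin> set ys"
    proof
      assume "x \<in> set ys"
      then obtain x' where "x' \<in> set xs" "x = x'"
        using list_emb_set[OF list_emb_Cons.hyps] by blast
      then show False using list_emb_Cons.prems by simp
    qed
    then show ?case using list_emb_Cons by simp
  next
    case (list_emb_Cons2 y x ys xs)
    have "filter (\<lambda>z. z \<in> set (y # ys)) xs = filter (\<lambda>z. z \<in> set ys) xs"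
      using list_emb_Cons2.prems list_emb_Cons2.hyps(1) by (intro filter_cong) auto
    then show ?case using list_emb_Cons2 by simp
  qed
next
  show "filter (\<lambda>x. x \<in> set ys) xs = ys \<Longrightarrow> subseq ys xs"
    by (metis subseq_filter_left)
qed

lemma contains_subseq_distinct_iff:
  "distinct \<pi> \<Longrightarrow> contains_subseq \<pi> \<sigma> \<longleftrightarrow> filter (\<lambda>x. x \<in> set \<sigma>) \<pi> = \<sigma>"
  by (simp add: contains_subseq_iff_subseq subseq_distinct_iff_filter)

definition perms_extending :: "'a set \<Rightarrow> 'a list \<Rightarrow> 'a list set" where
  "perms_extending T \<sigma> = {\<rho> \<in> permutations_of_set T. filter (\<lambda>x. x \<in> set \<sigma>) \<rho> = \<sigma>}"

lemma permutations_of_set_obtain_permutes: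
  assumes \<sigma>: "\<sigma> \<in> permutations_of_set S" and \<tau>: "\<tau> \<in> permutations_of_set S"
  obtains p where "p permutes S" "map p \<sigma> = \<tau>"
proof
  let ?I = "{..<length \<sigma>}"
  have len: "length \<tau> = length \<sigma>"
    using \<sigma> \<tau> by (simp add: length_finite_permutations_of_set)
  have bij\<sigma>: "bij_betw ((!) \<sigma>) ?I S" and bij\<tau>: "bij_betw ((!) \<tau>) ?I S"
    using \<sigma> \<tau> len by (auto intro: bij_betw_nth dest: permutations_of_setD)
  define q where "q = (!) \<tau> \<circ> inv_into ?I ((!) \<sigma>)"
  have "bij_betw q S S"
    unfolding q_def using bij_betw_inv_into[OF bij\<sigma>] bij\<tau> by (rule bij_betw_trans)
  then show "restrict_id q S permutes S"
    by (rule permutes_restrict_id)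
  have "restrict_id q S (\<sigma> ! i) = \<tau> ! i" if "i < length \<sigma>" for i
  proof -
    have "\<sigma> ! i \<in> S" using bij_betw_apply[OF bij\<sigma>] that by simp
    then show ?thesis
      using that inv_into_f_f[OF bij_betw_imp_inj_on[OF bij\<sigma>]]
      by (simp add: restrict_id_def q_def)
  qed
  then show "map (restrict_id q S) \<sigma> = \<tau>"
    using len by (intro nth_equalityI) auto
qed

lemma filter_map_permutes:
  "p permutes S \<Longrightarrow> filter (\<lambda>x. x \<in> S) (map p xs) = map p (filter (\<lambda>x. x \<in> S) xs)"
  by (simp add: filter_map comp_def permutes_in_image)

lemma perms_extending_map_permutes:
  assumes p: "p permutes set \<sigma>" and "set \<sigma> \<subseteq> T"
  shows "perms_extending T (map p \<sigma>) = map p ` perms_extending T \<sigma>"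
proof -
  have pT: "p permutes T" and pT': "inv p permutes T" and p': "inv p permutes set \<sigma>"
    using p assms(2) by (auto intro: permutes_subset permutes_inv)
  show ?thesis
  proof
    show "perms_extending T (map p \<sigma>) \<subseteq> map p ` perms_extending T \<sigma>"
    proof
      fix \<rho>' assume \<rho>': "\<rho>' \<in> perms_extending T (map p \<sigma>)"
      define \<rho> where "\<rho> = map (inv p) \<rho>'"
      have "\<rho> \<in> permutations_of_set T"
        using \<rho>' permutations_of_set_image_permutes[OF pT']
        by (auto simp: \<rho>_def perms_extending_def)
      moreover have "filter (\<lambda>x. x \<in> set \<sigma>) \<rho> = \<sigma>"
        using \<rho>' filter_map_permutes[OF p', of \<rho>']
        by (simp add: \<rho>_def perms_extending_def permutes_image[OF p] comp_def
            permutes_inverses[OF p])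
      moreover have "\<rho>' = map p \<rho>"
        by (simp add: \<rho>_def comp_def permutes_inverses[OF p])
      ultimately show "\<rho>' \<in> map p ` perms_extending T \<sigma>"
        unfolding perms_extending_def by blast
    qed
  next
    show "map p ` perms_extending T \<sigma> \<subseteq> perms_extending T (map p \<sigma>)"
      using permutations_of_set_image_permutes[OF pT] filter_map_permutes[OF p]
      by (auto simp: perms_extending_def permutes_image[OF p])
  qed
qed

lemma card_perms_extending:
  assumes "finite T" "distinct \<sigma>" "set \<sigma> \<subseteq> T"
  shows "fact (length \<sigma>) * card (perms_extending T \<sigma>) = fact (card T)"
proof -
  let ?S = "set \<sigma>"
  have \<sigma>: "\<sigma> \<in> permutations_of_set ?S" using assms(2) by auto
  have same_card: "card (perms_extending T \<tau>) = card (perms_extending T \<sigma>)"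
    if \<tau>: "\<tau> \<in> permutations_of_set ?S" for \<tau>
  proof -
    obtain p where p: "p permutes ?S" "map p \<sigma> = \<tau>"
      using permutations_of_set_obtain_permutes[OF \<sigma> \<tau>] by blast
    have "inj_on (map p) (perms_extending T \<sigma>)"
      using inj_mapI[OF permutes_inj[OF p(1)]] by (rule inj_on_subset) simp
    then show ?thesis
      using perms_extending_map_permutes[OF p(1) assms(3)] p(2) by (simp add: card_image)
  qed
  have partition: "permutations_of_set T = (\<Union>\<tau>\<in>permutations_of_set ?S. perms_extending T \<tau>)"
  proof
    show "permutations_of_set T \<subseteq> (\<Union>\<tau>\<in>permutations_of_set ?S. perms_extending T \<tau>)"
    proof
      fix \<rho> assume \<rho>: "\<rho> \<in> permutations_of_set T"
      then have "filter (\<lambda>x. x \<in> ?S) \<rho> \<in> permutations_of_set ?S"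
        using assms(3) by (auto simp: permutations_of_set_def)
      moreover from this have "\<rho> \<in> perms_extending T (filter (\<lambda>x. x \<in> ?S) \<rho>)"
        using \<rho> by (simp add: perms_extending_def permutations_of_set_def)
      ultimately show "\<rho> \<in> (\<Union>\<tau>\<in>permutations_of_set ?S. perms_extending T \<tau>)" by blast
    qed
  qed (auto simp: perms_extending_def)
  have "fact (card T) = card (\<Union>\<tau>\<in>permutations_of_set ?S. perms_extending T \<tau>)"
    using assms(1) by (simp flip: partition)
  also have "\<dots> = (\<Sum>\<tau>\<in>permutations_of_set ?S. card (perms_extending T \<tau>))"
    by (rule card_UN_disjoint) (auto simp: perms_extending_def, metis permutations_of_setD(1))
  also have "\<dots> = fact (length \<sigma>) * card (perms_extending T \<sigma>)"
    using same_card assms(2) by (simp add: distinct_card)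
  finally show ?thesis ..
qed

lemma card_contains_subseq_eq_sum_perms_extending:
  assumes Q: "finite Q" "Q \<subseteq> permutations_of_set U"
    and "T \<subseteq> U" "distinct \<sigma>" "set \<sigma> \<subseteq> T"
  shows "card {\<pi> \<in> Q. contains_subseq \<pi> \<sigma>}
       = (\<Sum>\<rho>\<in>perms_extending T \<sigma>. card {\<pi> \<in> Q. contains_subseq \<pi> \<rho>})"
proof -
  define r where "r \<pi> = filter (\<lambda>x. x \<in> T) \<pi>" for \<pi>
  have contains_iff_r: "contains_subseq \<pi> \<rho> \<longleftrightarrow> r \<pi> = \<rho>"
    if "\<pi> \<in> Q" "\<rho> \<in> permutations_of_set T" for \<pi> \<rho>
  proof -
    have "distinct \<pi>" "set \<rho> = T"
      using that Q(2) by (auto dest: permutations_of_setD)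
    then show ?thesis
      using contains_subseq_distinct_iff[of \<pi> \<rho>] by (simp add: r_def)
  qed
  have contains_\<sigma>_iff: "contains_subseq \<pi> \<sigma> \<longleftrightarrow> r \<pi> \<in> perms_extending T \<sigma>"
    if "\<pi> \<in> Q" for \<pi>
  proof -
    have "r \<pi> \<in> permutations_of_set T"
      using that Q(2) \<open>T \<subseteq> U\<close> by (auto simp: r_def permutations_of_set_def)
    moreover have "filter (\<lambda>x. x \<in> set \<sigma>) (r \<pi>) = filter (\<lambda>x. x \<in> set \<sigma>) \<pi>"
      using \<open>set \<sigma> \<subseteq> T\<close> by (auto simp: r_def intro: filter_cong)
    ultimately show ?thesis
      using that Q(2) contains_subseq_distinct_iff[of \<pi> \<sigma>]
      by (auto simp: perms_extending_def dest: permutations_of_setD)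
  qed
  have "{\<pi> \<in> Q. contains_subseq \<pi> \<sigma>} = (\<Union>\<rho>\<in>perms_extending T \<sigma>. {\<pi> \<in> Q. r \<pi> = \<rho>})"
    using contains_\<sigma>_iff by auto
  then have "card {\<pi> \<in> Q. contains_subseq \<pi> \<sigma>}
           = (\<Sum>\<rho>\<in>perms_extending T \<sigma>. card {\<pi> \<in> Q. r \<pi> = \<rho>})"
    using Q(1) by (auto intro: card_UN_disjoint simp: perms_extending_def)
  also have "\<dots> = (\<Sum>\<rho>\<in>perms_extending T \<sigma>. card {\<pi> \<in> Q. contains_subseq \<pi> \<rho>})"
    using contains_iff_r by (intro sum.cong refl arg_cong[where f = card])
      (auto simp: perms_extending_def)
  finally show ?thesis .
qed

lemma perms_eq_permutations_of_set: "perms n = permutations_of_set {1..n}"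
  unfolding perms_def permutations_of_set_def by auto

lemma frac_eq_sum_perms_extending:
  assumes P: "P n \<subseteq> perms n" and "distinct \<sigma>" "set \<sigma> \<subseteq> {1..m}" "m \<le> n"
  shows "frac P n \<sigma> = (\<Sum>\<rho>\<in>perms_extending {1..m} \<sigma>. frac P n \<rho>)"
proof -
  have P': "P n \<subseteq> permutations_of_set {1..n}"
    using P by (simp add: perms_eq_permutations_of_set)
  then have "finite (P n)"
    by (rule finite_subset) simp
  then have "card {\<pi> \<in> P n. contains_subseq \<pi> \<sigma>}
           = (\<Sum>\<rho>\<in>perms_extending {1..m} \<sigma>. card {\<pi> \<in> P n. contains_subseq \<pi> \<rho>})"
    by (rule card_contains_subseq_eq_sum_perms_extending[OF _ P']) (use assms(2-4) in auto)
  then show ?thesis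
    unfolding frac_def by (simp flip: sum_divide_distrib)
qed

lemma tendsto_frac_perm:
  assumes "p_quasirandom P" "k \<ge> 1" "\<tau> \<in> perms k"
  shows "((\<lambda>n. frac P n \<tau>) \<longlongrightarrow> 1 / fact k) (nonempty_seq P)"
proof -
  define dev where "dev n = Max ((\<lambda>\<tau>. \<bar>frac P n \<tau> - 1 / fact k\<bar>) ` perms k)" for n
  have dev: "(dev \<longlongrightarrow> 0) (nonempty_seq P)"
    using assms(1,2) unfolding p_quasirandom_def dev_def by blast
  have le: "norm (frac P n \<tau> - 1 / fact k) \<le> norm (dev n) * 1" for n
  proof -
    have "\<bar>frac P n \<tau> - 1 / fact k\<bar> \<le> dev n"
      unfolding dev_def
      by (rule Max_ge) (use assms(3) in \<open>auto simp: perms_eq_permutations_of_set\<close>)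
    then show ?thesis by simp
  qed
  have "((\<lambda>n. frac P n \<tau> - 1 / fact k) \<longlongrightarrow> 0) (nonempty_seq P)"
    by (rule tendsto_0_le[OF dev, where K = 1]) (use le in \<open>simp add: always_eventually\<close>)
  from tendsto_add[OF this tendsto_const[of "1 / fact k"]] show ?thesis
    by simp
qed

lemma eventually_ge_nonempty_seq: "eventually (\<lambda>n. m \<le> n) (nonempty_seq P)"
  unfolding nonempty_seq_def eventually_inf_principal
  by (rule eventually_mono[OF eventually_ge_at_top[of m]]) simp

theorem mainTheorem1:
  fixes P :: "nat \<Rightarrow> nat list set" and \<sigma> :: "nat list"
  assumes family: "\<And>n. P n \<subseteq> perms n"
    and inf_nonempty: "infinite {n. P n \<noteq> {}}"
    and qr: "p_quasirandom P"
    and dist: "distinct \<sigma>"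
    and pos: "\<forall>x \<in> set \<sigma>. x \<ge> 1"
  shows "((\<lambda>n. frac P n \<sigma>) \<longlongrightarrow> 1 / fact (length \<sigma>)) (nonempty_seq P)"
proof -
  \<comment> \<open>Inserting 1 gives m \<ge> 1 also for \<sigma> = [].\<close>
  define m where "m = Max (insert 1 (set \<sigma>))"
  have "x \<le> m" if "x \<in> insert 1 (set \<sigma>)" for x
    unfolding m_def using that by (intro Max_ge) auto
  then have m: "1 \<le> m" "set \<sigma> \<subseteq> {1..m}"
    using pos by auto
  define E where "E = perms_extending {1..m} \<sigma>"
  have card_E: "fact (length \<sigma>) * card E = fact m"
    unfolding E_def using card_perms_extending[OF _ dist m(2)] by simp
  have "eventually (\<lambda>n. (\<Sum>\<rho>\<in>E. frac P n \<rho>) = frac P n \<sigma>) (nonempty_seq P)"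
    using eventually_ge_nonempty_seq[of m P]
    by eventually_elim (simp add: E_def frac_eq_sum_perms_extending[OF family dist m(2)])
  moreover have "((\<lambda>n. \<Sum>\<rho>\<in>E. frac P n \<rho>) \<longlongrightarrow> (\<Sum>\<rho>\<in>E. 1 / fact m)) (nonempty_seq P)"
    by (intro tendsto_sum tendsto_frac_perm[OF qr m(1)])
      (simp add: E_def perms_extending_def perms_eq_permutations_of_set)
  moreover have "(\<Sum>\<rho>\<in>E. 1 / fact m :: real) = 1 / fact (length \<sigma>)"
  proof -
    have "fact (length \<sigma>) * real (card E) = fact m"
      using card_E by (metis of_nat_fact of_nat_mult)
    then show ?thesis
      by (simp add: field_simps)
  qed
  ultimately show ?thesis
    by (simp add: Lim_transform_eventually)
qed

end
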